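(* For every integer $d\ge 0$ and every line segment $s$ with $\operatorname{height}(s)=1$ and $\operatorname{width}(s)\le 1$, there exists a $d$-dimensional box type $T$ that contains $s$ when $s$ is translated so that its lower endpoint coincides with the midpoint of the bottom edge of $T$.
   Context: For a compact set $S\subset\mathbb R^2$, $\operatorname{width}(S)=\max_{p,q\in S}|x(p)-x(q)|$ and $\operatorname{height}(S)=\max_{p,q\in S}|y(p)-y(q)|$. A horizontal parallelogram is one with a pair of horizontal edges (its bottom and top edges). Box types: the $0$-dimensional (basic) box type $[\,]$ is a $2\times 1$ axis-parallel rectangle. Given a $d$-dimensional box type $T=[x_1,\dots,x_d]\in\{-1,0,+1\}^d$, which is a horizontal parallelogram of height $1$ with bottom edge $b$ and top edge $t$, partition $b$ into three equally long segments $b_{-1},b_0,b_{+1}$ (from left to right) and likewise $t$ into $t_{-1},t_0,t_{+1}$; for $x_{d+1}\in\{-1,0,+1\}$ the $(d+1)$-dimensional box type $T\oplus[x_{d+1}]=[x_1,\dots,x_{d+1}]$ is the parallelogram with bottom edge $b_0$ and top edge $t_{x_{d+1}}$. (Thus all box types obtained from a fixed basic rectangle share the midpoint of their bottom edges.) *)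

theory Defs
  imports "HOL-Analysis.Analysis"
begin

definition width :: "(real \<times> real) set \<Rightarrow> real" where
  "width S = Sup {\<bar>fst p - fst q\<bar> | p q. p \<in> S \<and> q \<in> S}"

definition height :: "(real \<times> real) set \<Rightarrow> real" where
  "height S = Sup {\<bar>snd p - snd q\<bar> | p q. p \<in> S \<and> q \<in> S}"

text \<open>A horizontal parallelogram of height 1 with bottom edge on y = 0 and top edge on y = 1
  is encoded by the x-coordinates (bottom-left, bottom-right, top-left, top-right).\<close>
type_synonym hpar = "real \<times> real \<times> real \<times> real"

definition hpar_set :: "hpar \<Rightarrow> (real \<times> real) set" where
  "hpar_set P = (case P of (bl, br, tlx, trx) \<Rightarrow>
     convex hull {(bl, 0), (br, 0), (trx, 1), (tlx, 1)})"

definition bottom_mid :: "hpar \<Rightarrow> real \<times> real" where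
  "bottom_mid P = (case P of (bl, br, tlx, trx) \<Rightarrow> ((bl + br) / 2, 0))"

definition basic_box :: hpar where
  "basic_box = (-1, 1, -1, 1)"

text \<open>Refinement step T \<oplus> [x]: bottom edge becomes the middle third b_0 of the bottom edge,
  top edge becomes the third t_x of the top edge (x = -1 left, 0 middle, +1 right).\<close>
definition refine :: "hpar \<Rightarrow> int \<Rightarrow> hpar" where
  "refine P x = (case P of (bl, br, tlx, trx) \<Rightarrow>
     (let lb = (br - bl) / 3; lt = (trx - tlx) / 3 in
       (bl + lb, bl + 2 * lb, tlx + real_of_int (x + 1) * lt, tlx + real_of_int (x + 2) * lt)))"

definition box_type :: "int list \<Rightarrow> hpar" where
  "box_type xs = foldl refine basic_box xs"

end

theory Submission
  imports Defs
begin

text \<open>After translation the segment runs from the midpoint of the bottom edge, which is the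
  origin for every box type, to the point \<open>(a, 1)\<close> with \<open>a = x(q) - x(p) \<in> [-1, 1]\<close>.
  The top edges of the three refinements \<open>T \<oplus> [x]\<close> are the three thirds of the top edge
  of \<open>T\<close>, so they cover it; starting from the basic box, whose top edge is \<open>[-1, 1]\<close>, one
  can therefore choose in every step a refinement whose top edge still contains \<open>a\<close>. By
  convexity the resulting box type contains the segment from the origin to \<open>(a, 1)\<close>.\<close>

lemma abs_diff_le_closed_segment_real:
  fixes a b x y :: real
  assumes "x \<in> closed_segment a b" "y \<in> closed_segment a b"
  shows "\<bar>x - y\<bar> \<le> \<bar>a - b\<bar>"
  using assms by (auto simp: closed_segment_eq_real_ivl split: if_splits)

lemma fst_in_closed_segment:
  "u \<in> closed_segment p q \<Longrightarrow> fst u \<in> closed_segment (fst p) (fst q)"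
  by (metis closed_segment_PairD prod.collapse)

lemma snd_in_closed_segment:
  "u \<in> closed_segment p q \<Longrightarrow> snd u \<in> closed_segment (snd p) (snd q)"
  by (metis closed_segment_PairD prod.collapse)

lemma width_closed_segment: "width (closed_segment p q) = \<bar>fst p - fst q\<bar>"
  unfolding width_def
  by (rule cSup_eq_maximum)
    (blast intro: abs_diff_le_closed_segment_real fst_in_closed_segment)+

lemma height_closed_segment: "height (closed_segment p q) = \<bar>snd p - snd q\<bar>"
  unfolding height_def
  by (rule cSup_eq_maximum)
    (blast intro: abs_diff_le_closed_segment_real snd_in_closed_segment)+

lemma Pair_in_closed_segment_horizontal:
  "x \<in> closed_segment a b \<Longrightarrow> (x, y) \<in> closed_segment (a, y) (b, y)"
  by (auto simp: in_segment algebra_simps)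

lemma closed_segment_bottom_mid_subset_hpar_set:
  assumes "tlx \<le> a" "a \<le> trx"
  shows "closed_segment (bottom_mid (bl, br, tlx, trx)) (a, 1) \<subseteq> hpar_set (bl, br, tlx, trx)"
proof -
  let ?H = "hpar_set (bl, br, tlx, trx)"
  have convex: "convex ?H"
    by (simp add: hpar_set_def)
  have corners: "(bl, 0) \<in> ?H" "(br, 0) \<in> ?H" "(tlx, 1) \<in> ?H" "(trx, 1) \<in> ?H"
    by (auto simp: hpar_set_def intro: hull_inc)
  have "bottom_mid (bl, br, tlx, trx) \<in> closed_segment (bl, 0) (br, 0)"
  proof -
    have "(bl + br) / 2 \<in> closed_segment bl br"
      using midpoint_in_closed_segment[of bl br] by (simp add: midpoint_def)
    then show ?thesis
      by (simp add: bottom_mid_def Pair_in_closed_segment_horizontal)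
  qed
  then have "bottom_mid (bl, br, tlx, trx) \<in> ?H"
    using closed_segment_subset[OF corners(1,2) convex] by blast
  moreover have "(a, 1) \<in> closed_segment (tlx, 1) (trx, 1)"
    using assms by (simp add: Pair_in_closed_segment_horizontal closed_segment_eq_real_ivl)
  then have "(a, 1) \<in> ?H"
    using closed_segment_subset[OF corners(3,4) convex] by blast
  ultimately show ?thesis
    by (rule closed_segment_subset[OF _ _ convex])
qed

lemma refine_top_edge_cover:
  assumes "tlx \<le> a" "a \<le> trx"
  obtains x tlx' trx' where "x \<in> {-1, 0, 1}" "tlx' \<le> a" "a \<le> trx'"
    and "refine (-c, c, tlx, trx) x = (-(c / 3), c / 3, tlx', trx')"
proof -
  define t where "t = (trx - tlx) / 3"
  have trx: "trx = tlx + 3 * t"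
    by (simp add: t_def field_simps)
  define x :: int where "x = (if a \<le> tlx + t then -1 else if a \<le> tlx + 2 * t then 0 else 1)"
  have "x \<in> {-1, 0, 1}"
    by (simp add: x_def)
  moreover have "tlx + real_of_int (x + 1) * t \<le> a" "a \<le> tlx + real_of_int (x + 2) * t"
    using assms by (auto simp: x_def trx)
  moreover have "refine (-c, c, tlx, trx) x =
      (-(c / 3), c / 3, tlx + real_of_int (x + 1) * t, tlx + real_of_int (x + 2) * t)"
    by (simp add: refine_def t_def Let_def field_simps)
  ultimately show thesis
    by (rule that)
qed

lemma refinements_top_edge_cover:
  assumes "tlx \<le> a" "a \<le> trx"
  shows "\<exists>xs. length xs = d \<and> set xs \<subseteq> {-1, 0, 1} \<and>
    (\<exists>c' tlx' trx'. foldl refine (-c, c, tlx, trx) xs = (-c', c', tlx', trx') \<and>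
      tlx' \<le> a \<and> a \<le> trx')"
  using assms
proof (induction d arbitrary: c tlx trx)
  case 0
  then show ?case
    by (intro exI[of _ "[]"]) simp
next
  case (Suc d)
  obtain x tlx' trx' where x: "x \<in> {-1, 0, 1}" "tlx' \<le> a" "a \<le> trx'"
    and step: "refine (-c, c, tlx, trx) x = (-(c / 3), c / 3, tlx', trx')"
    using refine_top_edge_cover[OF Suc.prems] .
  obtain xs where xs: "length xs = d" "set xs \<subseteq> {-1, 0, 1}"
    and cover: "\<exists>c' tlx'' trx''.
      foldl refine (-(c / 3), c / 3, tlx', trx') xs = (-c', c', tlx'', trx'') \<and>
      tlx'' \<le> a \<and> a \<le> trx''"
    using Suc.IH[where c = "c / 3", OF x(2,3)] by blast
  have "foldl refine (-c, c, tlx, trx) (x # xs) = foldl refine (-(c / 3), c / 3, tlx', trx') xs"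
    by (simp add: step)
  with x(1) xs cover show ?case
    by (intro exI[of _ "x # xs"]) simp
qed

theorem lemma14:
  fixes d :: nat and p q :: "real \<times> real"
  assumes "snd p \<le> snd q"
    and "height (closed_segment p q) = 1"
    and "width (closed_segment p q) \<le> 1"
  shows "\<exists>xs. length xs = d \<and> set xs \<subseteq> {-1, 0, 1} \<and>
           (\<lambda>z. z + (bottom_mid (box_type xs) - p)) ` closed_segment p q
             \<subseteq> hpar_set (box_type xs)"
proof -
  define a where "a = fst q - fst p"
  have "-1 \<le> a" "a \<le> 1"
    using assms(3) by (auto simp: a_def width_closed_segment)
  then obtain xs c tlx trx where xs: "length xs = d" "set xs \<subseteq> {-1, 0, 1}"
    and box: "box_type xs = (-c, c, tlx, trx)" "tlx \<le> a" "a \<le> trx"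
    using refinements_top_edge_cover[of "-1" a 1 d 1]
    by (auto simp: box_type_def basic_box_def)
  have "q - p = (a, 1)"
    using assms(1,2) by (simp add: a_def height_closed_segment prod_eq_iff)
  moreover have "bottom_mid (box_type xs) = 0"
    by (simp add: box bottom_mid_def zero_prod_def)
  ultimately have "(\<lambda>z. z + (bottom_mid (box_type xs) - p)) ` closed_segment p q
      = closed_segment (bottom_mid (box_type xs)) (a, 1)"
    using closed_segment_translation[of "-p" p q] by (simp add: add.commute)
  with xs box show ?thesis
    using closed_segment_bottom_mid_subset_hpar_set by metis
qed

end
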